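(* Let $a,b,c$ be nonnegative integers with $a+b+c=n$ and suppose $\gcd(a+b,b+c)=1$. Then in the meander graph $M=M(a,b,c\mid n)$ there are exactly two vertices of degree $1$, and every other vertex has degree $2$.
   Context: For compositions $\underline x=(a_1,\ldots,a_m)$, $\underline y=(b_1,\ldots,b_t)$ of $n$ (nonnegative integers summing to $n$), the meander $M(\underline x\mid\underline y)$ is the graph on vertices $1,\ldots,n$ whose edges are: for each part $a_k$ with $s=a_1+\cdots+a_{k-1}$, the top edges $\{s+j,\,s+a_k+1-j\}$ for $1\le j\le\lfloor a_k/2\rfloor$; and for each part $b_k$ with $s=b_1+\cdots+b_{k-1}$, the bottom edges $\{s+j,\,s+b_k+1-j\}$ for $1\le j\le\lfloor b_k/2\rfloor$. Here $\underline x=(a,b,c)$ and $\underline y=(n)$. *)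

theory Defs
  imports Main
begin

definition part_edges :: "nat \<Rightarrow> nat \<Rightarrow> nat set set" where
  "part_edges s k = {{s + j, s + k + 1 - j} | j. 1 \<le> j \<and> j \<le> k div 2}"

definition comp_edges :: "nat list \<Rightarrow> nat set set" where
  "comp_edges xs = (\<Union>k<length xs. part_edges (sum_list (take k xs)) (xs ! k))"

text \<open>Degree of vertex v in the meander M(xs | ys): top arcs plus bottom arcs through v
  (a top arc and a bottom arc joining the same pair are counted separately).\<close>
definition meander_degree :: "nat list \<Rightarrow> nat list \<Rightarrow> nat \<Rightarrow> nat" where
  "meander_degree xs ys v =
     card {e \<in> comp_edges xs. v \<in> e} + card {e \<in> comp_edges ys. v \<in> e}"

end

theory Submission
  imports Defs
begin

text \<open>Within a single part, the arcs pair each vertex with its mirror image, so every vertex of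
  the part lies on exactly one arc except the centre of an odd part. Hence a vertex of
  \<open>M(x | y)\<close> has degree 2 minus the number of compositions among \<open>x, y\<close> whose odd-part centres
  contain it. For \<open>x = (a, b, c)\<close> and \<open>y = (n)\<close>, coprimality of \<open>a + b\<close> and \<open>b + c\<close> means
  that \<open>a, b, c\<close> do not all have the same parity, so there are exactly two centres in total, and
  it excludes \<open>b + c = 0\<close>, \<open>a = c\<close> and \<open>a + b = 0\<close>, the only ways a centre of \<open>x\<close> can
  coincide with the centre of \<open>n\<close>.\<close>

definition centres :: "nat list \<Rightarrow> nat set" where
  "centres xs =
     {v. \<exists>k<length xs. odd (xs ! k) \<and> 2 * v = 2 * sum_list (take k xs) + xs ! k + 1}"

definition arc_degree :: "nat list \<Rightarrow> nat \<Rightarrow> nat" where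
  "arc_degree xs v = card {e \<in> comp_edges xs. v \<in> e}"

lemma sum_list_take_nth_le:
  fixes xs :: "nat list"
  assumes "k < length xs"
  shows "sum_list (take k xs) + xs ! k \<le> sum_list xs"
proof -
  have "sum_list (take k xs) + xs ! k = sum_list (take (Suc k) xs)"
    using assms by (simp add: take_Suc_conv_app_nth)
  also have "\<dots> \<le> sum_list (take (Suc k) xs) + sum_list (drop (Suc k) xs)" by simp
  finally show ?thesis by (metis append_take_drop_id sum_list_append)
qed

lemma part_edges_subset: "e \<in> part_edges s k \<Longrightarrow> e \<subseteq> {s<..s + k}"
  unfolding part_edges_def by auto

lemma comp_edges_subset: "e \<in> comp_edges xs \<Longrightarrow> e \<subseteq> {1..sum_list xs}"
  unfolding comp_edges_def
  by (fastforce dest!: part_edges_subset sum_list_take_nth_le)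

lemma centres_subset: "centres xs \<subseteq> {1..sum_list xs}"
  unfolding centres_def
  by (force dest!: sum_list_take_nth_le elim!: oddE)

lemma comp_edges_snoc:
  "comp_edges (xs @ [x]) = comp_edges xs \<union> part_edges (sum_list xs) x"
  unfolding comp_edges_def by (auto simp: lessThan_Suc nth_append)

lemma centres_snoc:
  "centres (xs @ [x]) = centres xs \<union> {v. odd x \<and> 2 * v = 2 * sum_list xs + x + 1}"
proof -
  have "(\<exists>k<length xs. odd ((xs @ [x]) ! k) \<and>
          2 * v = 2 * sum_list (take k (xs @ [x])) + (xs @ [x]) ! k + 1) \<longleftrightarrow> v \<in> centres xs" for v
    unfolding centres_def by (auto simp: nth_append)
  then show ?thesis
    unfolding centres_def[of "xs @ [x]"] by (auto simp: Ex_less_Suc)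
qed

lemma part_edges_through:
  "{e \<in> part_edges s k. v \<in> e} =
     (if s < v \<and> v \<le> s + k \<and> \<not> (odd k \<and> 2 * v = 2 * s + k + 1)
      then {{v, 2 * s + k + 1 - v}} else {})"
    (is "?through = (if ?inner then _ else _)")
proof (cases ?inner)
  case True
  have arc_through: "e \<in> ?through" if e: "e = {v, 2 * s + k + 1 - v}" for e
  proof (cases "2 * (v - s) \<le> k")
    case True
    with \<open>?inner\<close> have "e = {s + (v - s), s + k + 1 - (v - s)}" "1 \<le> v - s" "v - s \<le> k div 2"
      using e by auto
    then show ?thesis unfolding part_edges_def using e by blast
  next
    case False
    with \<open>?inner\<close>
    have "e = {s + (s + k + 1 - v), s + k + 1 - (s + k + 1 - v)}"
      "1 \<le> s + k + 1 - v" "s + k + 1 - v \<le> k div 2"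
      using e by (auto simp: insert_commute)
    then show ?thesis unfolding part_edges_def using e by blast
  qed
  have through_arc: "e = {v, 2 * s + k + 1 - v}" if through: "e \<in> ?through" for e
  proof -
    obtain j where j: "e = {s + j, s + k + 1 - j}" "1 \<le> j" "j \<le> k div 2" "v \<in> e"
      using through unfolding part_edges_def by blast
    then have "v = s + j \<or> v = s + k + 1 - j" by auto
    with j show ?thesis by (auto simp: insert_commute)
  qed
  have "?through = {{v, 2 * s + k + 1 - v}}"
  proof (rule set_eqI)
    show "e \<in> ?through \<longleftrightarrow> e \<in> {{v, 2 * s + k + 1 - v}}" for e
      using arc_through[of e] through_arc[of e] by blast
  qed
  with True show ?thesis by simp
next
  case False
  have "\<not> (1 \<le> j \<and> j \<le> k div 2 \<and> (v = s + j \<or> v = s + k + 1 - j))" for j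
    using False by auto
  then show ?thesis unfolding part_edges_def using False by auto
qed

lemma card_centres: "card (centres xs) = length (filter odd xs)"
proof (induction xs rule: rev_induct)
  case Nil
  then show ?case by (simp add: centres_def)
next
  case (snoc x xs)
  let ?new = "{v. odd x \<and> 2 * v = 2 * sum_list xs + x + 1}"
  have "centres xs \<inter> ?new = {}" using centres_subset[of xs] by auto
  moreover have "?new = (if odd x then {sum_list xs + (x + 1) div 2} else {})"
    by (auto elim!: oddE)
  moreover have "finite (centres xs)" using centres_subset finite_subset by blast
  ultimately show ?case
    by (simp add: centres_snoc card_Un_disjoint snoc.IH)
qed

lemma arc_degree_eq:
  assumes "v \<in> {1..sum_list xs}"
  shows "arc_degree xs v = (if v \<in> centres xs then 0 else 1)"
  using assms
proof (induction xs rule: rev_induct)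
  case Nil
  then show ?case by simp
next
  case (snoc x xs)
  have split: "{e \<in> comp_edges (xs @ [x]). v \<in> e} =
      {e \<in> comp_edges xs. v \<in> e} \<union> {e \<in> part_edges (sum_list xs) x. v \<in> e}"
    by (auto simp: comp_edges_snoc)
  show ?case
  proof (cases "v \<le> sum_list xs")
    case True
    then show ?thesis
      using snoc by (simp add: arc_degree_def split part_edges_through centres_snoc)
  next
    case False
    then have old_arcs: "{e \<in> comp_edges xs. v \<in> e} = {}" and "v \<notin> centres xs"
      using comp_edges_subset centres_subset by fastforce+
    with False snoc.prems show ?thesis
      unfolding arc_degree_def split old_arcs by (simp add: part_edges_through centres_snoc)
  qed
qed

lemma meander_degree_eq: "meander_degree xs ys v = arc_degree xs v + arc_degree ys v"
  unfolding meander_degree_def arc_degree_def ..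

lemma meander_degrees_of_disjoint_centres:
  assumes "sum_list xs = n" and "sum_list ys = n" and "centres xs \<inter> centres ys = {}"
  shows "card {v \<in> {1..n}. meander_degree xs ys v = 1} =
           length (filter odd xs) + length (filter odd ys)"
    and "\<forall>v \<in> {1..n}. meander_degree xs ys v \<noteq> 1 \<longrightarrow> meander_degree xs ys v = 2"
proof -
  have degree: "meander_degree xs ys v =
      (if v \<in> centres xs then 0 else 1) + (if v \<in> centres ys then 0 else 1)"
    if "v \<in> {1..n}" for v
    using that assms(1,2) by (simp add: meander_degree_eq arc_degree_eq)
  have "meander_degree xs ys v = 1 \<longleftrightarrow> v \<in> centres xs \<union> centres ys" if "v \<in> {1..n}" for v
    using degree[OF that] assms(3) by auto
  moreover have "centres xs \<union> centres ys \<subseteq> {1..n}"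
    using centres_subset[of xs] centres_subset[of ys] assms(1,2) by auto
  ultimately have "{v \<in> {1..n}. meander_degree xs ys v = 1} = centres xs \<union> centres ys"
    by blast
  moreover have "finite (centres xs)" "finite (centres ys)"
    using centres_subset finite_subset by blast+
  ultimately show "card {v \<in> {1..n}. meander_degree xs ys v = 1} =
      length (filter odd xs) + length (filter odd ys)"
    using assms(3) by (simp add: card_Un_disjoint card_centres)
  show "\<forall>v \<in> {1..n}. meander_degree xs ys v \<noteq> 1 \<longrightarrow> meander_degree xs ys v = 2"
    using degree assms(3) by auto
qed

lemma centres_single: "centres [n] = {v. odd n \<and> 2 * v = n + 1}"
  unfolding centres_def by simp

lemma centres_three_parts:
  "centres [a, b, c] =
     {v. odd a \<and> 2 * v = a + 1} \<union> {v. odd b \<and> 2 * v = 2 * a + b + 1}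
       \<union> {v. odd c \<and> 2 * v = 2 * (a + b) + c + 1}"
  using centres_snoc[of "[a, b]" c] centres_snoc[of "[a]" b] centres_snoc[of "[]" a]
  by (simp add: centres_def)

lemma centres_three_parts_disjoint:
  assumes "gcd (a + b) (b + c) = 1" and "a + b + c \<ge> 2"
  shows "centres [a, b, c] \<inter> centres [a + b + c] = {}"
proof -
  have "a + b \<noteq> 0"
  proof
    assume "a + b = 0"
    then have "gcd (a + b) (b + c) = a + b + c" by simp
    with assms show False by simp
  qed
  moreover have "b + c \<noteq> 0"
  proof
    assume "b + c = 0"
    then have "gcd (a + b) (b + c) = a + b + c" by simp
    with assms show False by simp
  qed
  moreover have "even b" if "a = c"
  proof -
    from that assms(1) have "a + b = 1" by (simp add: add.commute)
    with that assms(2) have "b = 0" by linarith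
    then show ?thesis by simp
  qed
  ultimately show ?thesis by (auto simp: centres_three_parts centres_single)
qed

theorem lemma4p11:
  fixes a b c n :: nat
  assumes "a + b + c = n" and "n \<ge> 2" and "gcd (a + b) (b + c) = 1"
  shows "card {v \<in> {1..n}. meander_degree [a, b, c] [n] v = 1} = 2
       \<and> (\<forall>v \<in> {1..n}. meander_degree [a, b, c] [n] v \<noteq> 1 \<longrightarrow>
              meander_degree [a, b, c] [n] v = 2)"
proof -
  have disjoint: "centres [a, b, c] \<inter> centres [n] = {}"
    using centres_three_parts_disjoint[of a b c] assms by simp
  have "\<not> (even (a + b) \<and> even (b + c))"
    using assms(3) by (metis gcd_greatest_iff odd_one)
  then have "length (filter odd [a, b, c]) + length (filter odd [n]) = 2"
    using assms(1) by auto
  moreover have sums: "sum_list [a, b, c] = n" "sum_list [n] = n"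
    using assms(1) by simp_all
  ultimately show ?thesis
    using meander_degrees_of_disjoint_centres[OF sums disjoint] by simp
qed

end
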